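(* Let $(S_n)_{n\in\mathbb{N}_0}$ be a demimartingale with $S_0\equiv 0$. Then for every $p\in(0,1)$ and every $n\in\mathbb{N}_0$, $$\mathbb{E}\Big[\Big(\sup_{0\le k\le n} S_k\Big)^p\Big]\le \frac{1}{1-p}\Big(\mathbb{E}\Big[-\inf_{0\le k\le n} S_k\Big]\Big)^p .$$
   Context: All random variables live on a common probability space. A sequence $(S_n)_{n\in\mathbb{N}_0}$ of integrable ($L^1$) real random variables is called a demimartingale if for every $j\ge 0$, $$\mathbb{E}\big[(S_{j+1}-S_j)\, f(S_0,S_1,\dots,S_j)\big]\ge 0$$ for every function $f:\mathbb{R}^{j+1}\to\mathbb{R}$ that is nondecreasing in each coordinate, whenever the expectation is defined. (Since $S_0\equiv0$ here, the dependence on $S_0$ is immaterial.) Note $\sup_{0\le k\le n}S_k\ge S_0=0$ and $-\inf_{0\le k\le n}S_k\ge 0$. *)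

theory Defs
  imports "HOL-Probability.Probability"
begin

definition coord_mono :: "nat \<Rightarrow> (real list \<Rightarrow> real) \<Rightarrow> bool" where
  "coord_mono m f \<longleftrightarrow>
     (\<forall>xs ys. length xs = m \<and> length ys = m \<and> (\<forall>i<m. xs ! i \<le> ys ! i) \<longrightarrow> f xs \<le> f ys)"

text \<open>Demimartingale: each \<open>S n\<close> integrable, and
  \<open>E[(S(j+1) - S j) f(S 0, ..., S j)] \<ge> 0\<close> for every coordinatewise nondecreasing \<open>f\<close>
  for which the expectation exists (i.e. the integrand is integrable).\<close>
definition demimartingale :: "'a measure \<Rightarrow> (nat \<Rightarrow> 'a \<Rightarrow> real) \<Rightarrow> bool" where
  "demimartingale M S \<longleftrightarrow>
     (\<forall>n. integrable M (S n)) \<and>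
     (\<forall>j f. coord_mono (Suc j) f \<longrightarrow>
        integrable M (\<lambda>\<omega>. (S (Suc j) \<omega> - S j \<omega>) * f (map (\<lambda>i. S i \<omega>) [0..<Suc j])) \<longrightarrow>
        (\<integral>\<omega>. (S (Suc j) \<omega> - S j \<omega>) * f (map (\<lambda>i. S i \<omega>) [0..<Suc j]) \<partial>M) \<ge> 0)"

end

theory Submission
  imports Defs
begin

text \<open>By the layer-cake formula, a weak-type bound \<open>\<lambda> P(X \<ge> \<lambda>) \<le> c\<close> for a nonnegative \<open>X\<close>
  gives \<open>E[X^p] \<le> c^p / (1 - p)\<close> when \<open>0 < p < 1\<close>. For the running maximum \<open>X = max {S 0, \<dots>, S n}\<close>
  such a bound with \<open>c = E[- min {S 0, \<dots>, S n}]\<close> comes from the Newman--Wright maximal inequality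
  \<open>\<lambda> P(X \<ge> \<lambda>) \<le> E[S n; X \<ge> \<lambda>]\<close>. That inequality is a pathwise summation by parts against the
  indicator \<open>a j\<close> of having reached level \<open>\<lambda>\<close> by time \<open>j\<close>; as \<open>a j\<close> is a nondecreasing function of
  \<open>S 0, \<dots>, S j\<close>, the demimartingale property makes every term \<open>E[(S (j + 1) - S j) a j]\<close>
  nonnegative. Finally \<open>S n \<cdot> 1{X \<ge> \<lambda>} \<le> S n - min {S 0, \<dots>, S n}\<close> because the minimum is at most
  \<open>S 0 = 0\<close>, and \<open>E[S n] = E[S 0] = 0\<close>.\<close>

lemma nn_integral_layer_cake:
  fixes Y :: "'a \<Rightarrow> real"
  assumes "sigma_finite_measure M" and [measurable]: "Y \<in> borel_measurable M"
  shows "(\<integral>\<^sup>+\<omega>. ennreal (Y \<omega>) \<partial>M) = (\<integral>\<^sup>+t\<in>{0..}. emeasure M {\<omega>\<in>space M. t < Y \<omega>} \<partial>lborel)"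
proof -
  interpret pair_sigma_finite M lborel
    by (intro pair_sigma_finite.intro assms(1) sigma_finite_lborel)
  define f where "f \<omega> t = (indicator {0..<Y \<omega>} t :: ennreal)" for \<omega> t
  have "case_prod f = (\<lambda>x. if 0 \<le> snd x \<and> snd x < Y (fst x) then 1 else 0)"
    by (auto simp: f_def fun_eq_iff)
  also have "\<dots> \<in> borel_measurable (M \<Otimes>\<^sub>M lborel)" by measurable
  finally have f_measurable: "case_prod f \<in> borel_measurable (M \<Otimes>\<^sub>M lborel)" .
  have "(\<integral>\<^sup>+t. f \<omega> t \<partial>lborel) = ennreal (Y \<omega>)" for \<omega>
    by (cases "0 \<le> Y \<omega>") (auto simp: f_def ennreal_neg)
  moreover have "(\<integral>\<^sup>+\<omega>. f \<omega> t \<partial>M) = emeasure M {\<omega>\<in>space M. t < Y \<omega>} * indicator {0..} t" for t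
  proof -
    have "(\<integral>\<^sup>+\<omega>. f \<omega> t \<partial>M) = (\<integral>\<^sup>+\<omega>. indicator {\<omega>\<in>space M. t < Y \<omega>} \<omega> * indicator {0..} t \<partial>M)"
      by (intro nn_integral_cong) (auto simp: f_def indicator_def)
    then show ?thesis by (simp add: nn_integral_multc)
  qed
  ultimately show ?thesis
    using Fubini'[OF f_measurable] by simp
qed

lemma nn_integral_min_one_powr_le:
  fixes c p :: real
  assumes p: "0 < p" "p < 1" and c: "0 \<le> c"
  shows "(\<integral>\<^sup>+t\<in>{0..}. min 1 (ennreal (c * t powr (- 1 / p))) \<partial>lborel) \<le> ennreal (c powr p / (1 - p))"
proof (cases "c = 0")
  case False
  with c have c_pos: "0 < c" by simp
  define a where "a = c powr p"
  define e where "e = - 1 / p"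
  have a_pos: "0 < a" and e: "e < - 1" using c_pos p by (auto simp: a_def e_def field_simps)
  have "(\<integral>\<^sup>+t\<in>{0..}. min 1 (ennreal (c * t powr e)) \<partial>lborel)
      \<le> (\<integral>\<^sup>+t. ennreal (indicator {0..<a} t) + ennreal (indicator {a..} t * (c * t powr e)) \<partial>lborel)"
    using a_pos by (intro nn_integral_mono) (auto simp: indicator_def)
  also have "\<dots> = ennreal a + ennreal (c * (- (a powr (e + 1)) / (e + 1)))"
  proof -
    have "(\<integral>\<^sup>+t. ennreal (indicator {a..} t * (c * t powr e)) \<partial>lborel) = ennreal (c * (- (a powr (e + 1)) / (e + 1)))"
      using c_pos by (intro nn_integral_has_integral_lebesgue has_integral_mult_right
          has_integral_powr_to_inf e a_pos) auto
    moreover have "(\<integral>\<^sup>+t. ennreal (indicator {0..<a} t) \<partial>lborel) = ennreal a"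
      using a_pos by (simp add: ennreal_indicator)
    ultimately show ?thesis by (subst nn_integral_add) auto
  qed
  also have "\<dots> = ennreal (a + c * (- (a powr (e + 1)) / (e + 1)))"
    using a_pos c_pos e by (intro ennreal_plus[symmetric]) (auto simp: divide_nonneg_neg)
  also have "a + c * (- (a powr (e + 1)) / (e + 1)) = c powr p / (1 - p)"
  proof -
    have "p * (e + 1) = p - 1" and "e + 1 = (p - 1) / p"
      using p by (simp_all add: e_def field_simps)
    moreover have "c * c powr (p - 1) = c powr p"
      using c_pos powr_add[of c 1 "p - 1"] by simp
    ultimately have "c * a powr (e + 1) = a" and "e + 1 = (p - 1) / p"
      by (simp_all add: a_def powr_powr)
    then have "a + c * (- (a powr (e + 1)) / (e + 1)) = a - a / ((p - 1) / p)"
      by (metis minus_divide_left minus_mult_right diff_conv_add_uminus times_divide_eq_right)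
    also have "\<dots> = a / (1 - p)"
      using p by (simp add: field_simps)
    finally show ?thesis by (simp add: a_def)
  qed
  finally show ?thesis by (simp add: e_def)
qed simp

lemma integral_powr_le_of_weak_bound:
  fixes X :: "'a \<Rightarrow> real"
  assumes "prob_space M" and [measurable]: "X \<in> borel_measurable M"
    and X_nonneg: "\<And>\<omega>. \<omega> \<in> space M \<Longrightarrow> 0 \<le> X \<omega>"
    and p: "0 < p" "p < 1" and c: "0 \<le> c"
    and weak: "\<And>l. 0 < l \<Longrightarrow> l * measure M {\<omega>\<in>space M. l \<le> X \<omega>} \<le> c"
  shows "(\<integral>\<omega>. X \<omega> powr p \<partial>M) \<le> c powr p / (1 - p)"
proof -
  interpret prob_space M by fact
  have tail: "emeasure M {\<omega>\<in>space M. t < X \<omega> powr p} \<le> min 1 (ennreal (c * t powr (- 1 / p)))"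
    if t: "0 < t" for t
    \<comment> \<open>Fails at \<open>t = 0\<close>, where the right-hand side is \<open>0\<close> since \<open>0 powr _ = 0\<close>; a null set.\<close>
  proof -
    define l where "l = t powr (1 / p)"
    have l: "0 < l" using t by (simp add: l_def)
    have "{\<omega>\<in>space M. t < X \<omega> powr p} \<subseteq> {\<omega>\<in>space M. l \<le> X \<omega>}"
    proof safe
      fix \<omega> assume \<omega>: "\<omega> \<in> space M" and "t < X \<omega> powr p"
      then have "t powr (1 / p) \<le> (X \<omega> powr p) powr (1 / p)"
        using t p by (intro powr_mono2) auto
      then show "l \<le> X \<omega>"
        using X_nonneg[OF \<omega>] p by (simp add: l_def powr_powr)
    qed
    then have "emeasure M {\<omega>\<in>space M. t < X \<omega> powr p} \<le> ennreal (measure M {\<omega>\<in>space M. l \<le> X \<omega>})"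
      by (simp add: emeasure_eq_measure[symmetric] emeasure_mono)
    also have "\<dots> \<le> ennreal (c / l)"
      using weak[OF l] l by (intro ennreal_leI) (simp add: field_simps)
    also have "c / l = c * t powr (- 1 / p)"
      using t by (simp add: l_def powr_minus_divide divide_inverse powr_minus)
    finally show ?thesis
      by (simp add: emeasure_le_1)
  qed
  have "(\<integral>\<^sup>+\<omega>. ennreal (X \<omega> powr p) \<partial>M) = (\<integral>\<^sup>+t\<in>{0..}. emeasure M {\<omega>\<in>space M. t < X \<omega> powr p} \<partial>lborel)"
    by (intro nn_integral_layer_cake sigma_finite_measure_axioms) measurable
  also have "\<dots> \<le> (\<integral>\<^sup>+t\<in>{0..}. min 1 (ennreal (c * t powr (- 1 / p))) \<partial>lborel)"
    by (intro nn_integral_mono_AE)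
      (use AE_lborel_singleton[of 0] tail in \<open>auto elim!: eventually_mono simp: indicator_def\<close>)
  also have "\<dots> \<le> ennreal (c powr p / (1 - p))"
    by (rule nn_integral_min_one_powr_le[OF p c])
  finally have "(\<integral>\<^sup>+\<omega>. ennreal (X \<omega> powr p) \<partial>M) \<le> ennreal (c powr p / (1 - p))" .
  moreover have "(\<integral>\<omega>. X \<omega> powr p \<partial>M) = enn2real (\<integral>\<^sup>+\<omega>. ennreal (X \<omega> powr p) \<partial>M)"
    by (intro integral_eq_nn_integral) auto
  ultimately show ?thesis
    using p c by (simp add: enn2real_leI)
qed

lemma integrable_Min_image:
  fixes f :: "'i \<Rightarrow> 'a \<Rightarrow> real"
  assumes "finite I" "I \<noteq> {}" "\<And>i. i \<in> I \<Longrightarrow> integrable M (f i)"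
  shows "integrable M (\<lambda>\<omega>. Min ((\<lambda>i. f i \<omega>) ` I))"
  using assms by (induction I rule: finite_ne_induct) simp_all

lemma coord_mono_exists_ge:
  "coord_mono m (\<lambda>xs. of_bool (\<exists>i<length xs. l \<le> xs ! i))"
  unfolding coord_mono_def by (auto intro: order_trans)

lemma sum_increments_mult_hitting_le:
  fixes s :: "nat \<Rightarrow> real" and l :: real
  defines "a j \<equiv> of_bool (\<exists>i\<le>j. l \<le> s i)"
  shows "(\<Sum>j<m. (s (Suc j) - s j) * a j) + l * a m \<le> s m * a m"
proof (induction m)
  case (Suc m)
  have "l * (a (Suc m) - a m) \<le> s (Suc m) * (a (Suc m) - a m)"
    by (auto simp: a_def le_Suc_eq)
  with Suc show ?case by (simp add: algebra_simps)
qed (simp add: a_def)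

context
  fixes M :: "'a measure" and S :: "nat \<Rightarrow> 'a \<Rightarrow> real"
  assumes demi: "demimartingale M S"
begin

lemma demimartingale_integrable: "integrable M (S n)"
  using demi by (simp add: demimartingale_def)

lemma demimartingale_measurable [measurable]: "S n \<in> borel_measurable M"
  using demimartingale_integrable by auto

lemma demimartingale_increment_integral_nonneg:
  assumes "coord_mono (Suc j) f"
    and "integrable M (\<lambda>\<omega>. (S (Suc j) \<omega> - S j \<omega>) * f (map (\<lambda>i. S i \<omega>) [0..<Suc j]))"
  shows "0 \<le> (\<integral>\<omega>. (S (Suc j) \<omega> - S j \<omega>) * f (map (\<lambda>i. S i \<omega>) [0..<Suc j]) \<partial>M)"
  using demi assms by (simp add: demimartingale_def)

lemma demimartingale_integral_increment: "(\<integral>\<omega>. S (Suc j) \<omega> - S j \<omega> \<partial>M) = 0"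
proof -
  have "0 \<le> (\<integral>\<omega>. (S (Suc j) \<omega> - S j \<omega>) * c \<partial>M)" for c
    using demimartingale_increment_integral_nonneg[of j "\<lambda>_. c"]
    by (simp add: coord_mono_def demimartingale_integrable)
  from this[of 1] this[of "- 1"] show ?thesis
    by (simp only: mult_1_right mult_minus1_right integral_minus)
qed

lemma demimartingale_integral_eq: "(\<integral>\<omega>. S n \<omega> \<partial>M) = (\<integral>\<omega>. S 0 \<omega> \<partial>M)"
proof (induction n)
  case (Suc n)
  then show ?case
    using demimartingale_integral_increment[of n]
    by (simp add: Bochner_Integration.integral_diff demimartingale_integrable)
qed simp

lemma demimartingale_maximal_ineq:
  fixes l :: real and n :: nat
  assumes "finite_measure M"
  defines "B \<equiv> {\<omega>\<in>space M. l \<le> Max ((\<lambda>k. S k \<omega>) ` {0..n})}"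
  shows "l * measure M B \<le> (\<integral>\<omega>. indicator B \<omega> * S n \<omega> \<partial>M)"
proof -
  interpret finite_measure M by fact
  define a :: "nat \<Rightarrow> 'a \<Rightarrow> real" where "a j \<omega> = of_bool (\<exists>i\<le>j. l \<le> S i \<omega>)" for j \<omega>
  have a_Max: "a j \<omega> = of_bool (l \<le> Max ((\<lambda>k. S k \<omega>) ` {0..j}))" for j \<omega>
    by (subst Max_ge_iff) (auto simp: a_def)
  have [measurable]: "a j \<in> borel_measurable M" for j
    unfolding a_Max by measurable
  have integrable_mult_a: "integrable M (\<lambda>\<omega>. f \<omega> * a j \<omega>)" if "integrable M f" for f j
    by (rule Bochner_Integration.integrable_bound[OF that]) (use that in \<open>auto simp: a_def\<close>)
  note integrable_increment = integrable_mult_a[OF Bochner_Integration.integrable_diff,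
      OF demimartingale_integrable demimartingale_integrable]
  have increment_nonneg: "0 \<le> (\<integral>\<omega>. (S (Suc j) \<omega> - S j \<omega>) * a j \<omega> \<partial>M)" for j
  proof -
    have "of_bool (\<exists>i<length (map (\<lambda>i. S i \<omega>) [0..<Suc j]). l \<le> map (\<lambda>i. S i \<omega>) [0..<Suc j] ! i) = a j \<omega>" for \<omega>
      by (auto simp del: upt_Suc simp: a_def less_Suc_eq_le)
    then show ?thesis
      using demimartingale_increment_integral_nonneg[OF coord_mono_exists_ge, of j l] integrable_increment
      by (simp del: upt_Suc)
  qed
  have indicator_B: "indicator B \<omega> = a n \<omega>" if "\<omega> \<in> space M" for \<omega>
    using that by (simp add: B_def a_Max indicator_def)
  have integrable_a: "integrable M (a n)"
    using integrable_mult_a[of "\<lambda>_. 1"] by simp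
  have "B \<in> sets M"
    unfolding B_def by measurable
  then have "measure M B = (\<integral>\<omega>. indicator B \<omega> \<partial>M)"
    by (simp add: Int_absorb2 sets.sets_into_space)
  also have "\<dots> = (\<integral>\<omega>. a n \<omega> \<partial>M)"
    by (intro Bochner_Integration.integral_cong) (simp_all add: indicator_B)
  finally have "l * measure M B = (\<integral>\<omega>. l * a n \<omega> \<partial>M)"
    by simp
  also have "\<dots> \<le> (\<Sum>j<n. (\<integral>\<omega>. (S (Suc j) \<omega> - S j \<omega>) * a j \<omega> \<partial>M)) + (\<integral>\<omega>. l * a n \<omega> \<partial>M)"
    using increment_nonneg by (simp add: sum_nonneg)
  also have "\<dots> = (\<integral>\<omega>. (\<Sum>j<n. (S (Suc j) \<omega> - S j \<omega>) * a j \<omega>) + l * a n \<omega> \<partial>M)"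
    using integrable_increment integrable_a by simp
  also have "\<dots> \<le> (\<integral>\<omega>. S n \<omega> * a n \<omega> \<partial>M)"
  proof (intro integral_mono)
    show "(\<Sum>j<n. (S (Suc j) \<omega> - S j \<omega>) * a j \<omega>) + l * a n \<omega> \<le> S n \<omega> * a n \<omega>" for \<omega>
      unfolding a_def by (rule sum_increments_mult_hitting_le)
  qed (use integrable_increment integrable_a in \<open>auto intro: integrable_mult_a demimartingale_integrable\<close>)
  also have "\<dots> = (\<integral>\<omega>. indicator B \<omega> * S n \<omega> \<partial>M)"
    by (intro Bochner_Integration.integral_cong) (simp_all add: indicator_B)
  finally show ?thesis .
qed

lemma demimartingale_maximal_ineq_Min:
  fixes l :: real and n :: nat
  assumes "finite_measure M" and S_0: "\<And>\<omega>. \<omega> \<in> space M \<Longrightarrow> S 0 \<omega> = 0"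
  shows "l * measure M {\<omega>\<in>space M. l \<le> Max ((\<lambda>k. S k \<omega>) ` {0..n})}
           \<le> (\<integral>\<omega>. - Min ((\<lambda>k. S k \<omega>) ` {0..n}) \<partial>M)"
proof -
  let ?B = "{\<omega>\<in>space M. l \<le> Max ((\<lambda>k. S k \<omega>) ` {0..n})}"
  let ?Min = "\<lambda>\<omega>. Min ((\<lambda>k. S k \<omega>) ` {0..n})"
  have integrable_Min: "integrable M ?Min"
    by (intro integrable_Min_image demimartingale_integrable) auto
  have "l * measure M ?B \<le> (\<integral>\<omega>. indicator ?B \<omega> * S n \<omega> \<partial>M)"
    by (rule demimartingale_maximal_ineq[OF assms(1)])
  also have "\<dots> \<le> (\<integral>\<omega>. S n \<omega> - ?Min \<omega> \<partial>M)"
  proof (intro integral_mono)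
    fix \<omega> assume "\<omega> \<in> space M"
    have Min_le_S_n: "?Min \<omega> \<le> S n \<omega>" and "?Min \<omega> \<le> S 0 \<omega>"
      by (simp_all add: Min_le)
    with S_0[OF \<open>\<omega> \<in> space M\<close>] have Min_nonpos: "?Min \<omega> \<le> 0"
      by linarith
    show "indicator ?B \<omega> * S n \<omega> \<le> S n \<omega> - ?Min \<omega>"
    proof (cases "\<omega> \<in> ?B")
      case True
      then have "indicator ?B \<omega> * S n \<omega> = S n \<omega>"
        by (simp only: indicator_simps(1)[OF True] mult_1)
      with Min_nonpos show ?thesis by linarith
    next
      case False
      then have "indicator ?B \<omega> * S n \<omega> = 0"
        by (simp only: indicator_simps(2)[OF False] mult_zero_left)
      with Min_le_S_n show ?thesis by linarith
    qed
  next
    have "?B \<in> sets M"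
      by measurable
    from integrable_mult_indicator[OF this demimartingale_integrable]
    show "integrable M (\<lambda>\<omega>. indicator ?B \<omega> * S n \<omega>)"
      by (simp only: real_scaleR_def)
    show "integrable M (\<lambda>\<omega>. S n \<omega> - ?Min \<omega>)"
      by (rule Bochner_Integration.integrable_diff[OF demimartingale_integrable integrable_Min])
  qed
  also have "\<dots> = (\<integral>\<omega>. - ?Min \<omega> \<partial>M)"
  proof -
    have "(\<integral>\<omega>. S 0 \<omega> \<partial>M) = (\<integral>\<omega>. 0 \<partial>M)"
      by (rule Bochner_Integration.integral_cong) (simp_all only: S_0)
    then have "(\<integral>\<omega>. S n \<omega> \<partial>M) = 0"
      using demimartingale_integral_eq[of n] by (simp only: integral_zero)
    moreover have "(\<integral>\<omega>. S n \<omega> - ?Min \<omega> \<partial>M) = (\<integral>\<omega>. S n \<omega> \<partial>M) - (\<integral>\<omega>. ?Min \<omega> \<partial>M)"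
      by (rule Bochner_Integration.integral_diff[OF demimartingale_integrable integrable_Min])
    moreover have "(\<integral>\<omega>. - ?Min \<omega> \<partial>M) = - (\<integral>\<omega>. ?Min \<omega> \<partial>M)"
      by (rule Bochner_Integration.integral_minus)
    ultimately show ?thesis
      by linarith
  qed
  finally show ?thesis .
qed

end

theorem lemma2p1:
  fixes M :: "'a measure" and S :: "nat \<Rightarrow> 'a \<Rightarrow> real" and p :: real and n :: nat
  assumes "prob_space M"
    and "demimartingale M S"
    and "\<forall>\<omega>\<in>space M. S 0 \<omega> = 0"
    and "0 < p" and "p < 1"
  shows "(\<integral>\<omega>. (Max ((\<lambda>k. S k \<omega>) ` {0..n})) powr p \<partial>M)
           \<le> 1 / (1 - p) * (\<integral>\<omega>. - Min ((\<lambda>k. S k \<omega>) ` {0..n}) \<partial>M) powr p"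
proof -
  interpret prob_space M by fact
  note demimartingale_measurable[OF assms(2), measurable]
  have "S 0 \<omega> \<le> Max ((\<lambda>k. S k \<omega>) ` {0..n})" "Min ((\<lambda>k. S k \<omega>) ` {0..n}) \<le> S 0 \<omega>" for \<omega>
    by (simp_all add: Max_ge Min_le)
  then have Max_nonneg: "0 \<le> Max ((\<lambda>k. S k \<omega>) ` {0..n})"
    and neg_Min_nonneg: "0 \<le> - Min ((\<lambda>k. S k \<omega>) ` {0..n})" if "\<omega> \<in> space M" for \<omega>
    using assms(3) that by force+
  have "0 \<le> (\<integral>\<omega>. - Min ((\<lambda>k. S k \<omega>) ` {0..n}) \<partial>M)"
    using neg_Min_nonneg by (intro integral_nonneg_AE AE_I2)
  then have "(\<integral>\<omega>. (Max ((\<lambda>k. S k \<omega>) ` {0..n})) powr p \<partial>M)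
      \<le> (\<integral>\<omega>. - Min ((\<lambda>k. S k \<omega>) ` {0..n}) \<partial>M) powr p / (1 - p)"
    using Max_nonneg assms(3-5)
    by (intro integral_powr_le_of_weak_bound[OF assms(1)]
        demimartingale_maximal_ineq_Min[OF assms(2) finite_measure_axioms]) auto
  then show ?thesis
    by simp
qed

end
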